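(* Let $\mathcal{M}\subset\mathbb{R}^n$ be a locally symmetric $C^2$ submanifold with characteristic permutation $\sigma_*$. Let $\sigma\in\Sigma^n$ and $\bar x\in\mathcal{M}\cap\Delta(\sigma)$, and let $v\in N_{\mathcal{M}}(\bar x)$. Then $v_i=v_j$ whenever $i,j\in\mathbb{N}_n\setminus\mathrm{supp}(\sigma_* )$ belong to the same cycle of $\sigma$; equivalently, writing $v^F\in\mathbb{R}^{\kappa_*}$ for the subvector of $v$ formed by the coordinates with indices in $\mathbb{N}_n\setminus\mathrm{supp}(\sigma_* )$, $v^F$ is constant on each set of the partition of these indices induced by the cycles of $\sigma$ contained in $\mathbb{N}_n\setminus\mathrm{supp}(\sigma_* )$.
   Context: $\Sigma^n$ is the group of permutations of $\mathbb{N}_n=\{1,\dots,n\}$, acting on $\mathbb{R}^n$ by $(\sigma x)_i=x_{\sigma^{-1}(i)}$; $\mathrm{supp}(\sigma)$ is the set of indices not fixed by $\sigma$. $P(\sigma)$ is the partition of $\mathbb{N}_n$ into orbits of $\sigma$; $P(x)$ is the partition in which $i,j$ are in the same set iff $x_i=x_j$; $\Delta(\sigma)=\{x:P(x)=P(\sigma)\}$. $\mathbb{R}^n_{\ge}=\{x:x_1\ge\cdots\ge x_n\}$; $B(x,\delta)$ open ball. A set $S$ is locally symmetric if $S\cap\mathbb{R}^n_{\ge}\neq\emptyset$ and for every $x\in S$ there is $\delta>0$ with $\sigma(S\cap B(x,\delta))=S\cap B(x,\delta)$ for all $y\in S\cap B(x,\delta)$ and all $\sigma$ with $\sigma y=y$.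 A locally symmetric $C^2$ submanifold is a connected $C^2$ submanifold without boundary which is locally symmetric. $N_{\mathcal{M}}(\bar x)$ is the normal space (orthogonal complement of the tangent space $T_{\mathcal{M}}(\bar x)$). A characteristic permutation is a $\sigma_*$ such that $\mathcal{M}\cap B(y,\delta)\subset\Delta(\sigma_* )$ for some $y\in\mathcal{M}$, $\delta>0$ (its partition is determined by $\mathcal{M}$); $\kappa_*=|\mathbb{N}_n\setminus\mathrm{supp}(\sigma_* )|$. *)

theory Defs
  imports "HOL-Analysis.Analysis" "HOL-Combinatorics.Permutations"
begin

text \<open>Vectors of R^n are modelled as real^'n, the index type 'n being a finite
linearly ordered type (playing the role of {1,...,n} with its usual order).\<close>

definition perm_act :: "('n::finite \<Rightarrow> 'n) \<Rightarrow> real^'n \<Rightarrow> real^'n" where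
  "perm_act \<sigma> x = (\<chi> i. x $ (inv \<sigma> i))"

definition supp :: "('n \<Rightarrow> 'n) \<Rightarrow> 'n set" where
  "supp \<sigma> = {i. \<sigma> i \<noteq> i}"

definition same_cycle :: "('n \<Rightarrow> 'n) \<Rightarrow> 'n \<Rightarrow> 'n \<Rightarrow> bool" where
  "same_cycle \<sigma> i j \<longleftrightarrow> (\<exists>k::nat. (\<sigma> ^^ k) i = j)"

definition perm_partition :: "('n \<Rightarrow> 'n) \<Rightarrow> 'n set set" where
  "perm_partition \<sigma> = {{j. same_cycle \<sigma> i j} | i. True}"

definition vec_partition :: "real^'n::finite \<Rightarrow> 'n set set" where
  "vec_partition x = {{j. x $ j = x $ i} | i. True}"

definition Delta :: "('n::finite \<Rightarrow> 'n) \<Rightarrow> (real^'n) set" where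
  "Delta \<sigma> = {x. vec_partition x = perm_partition \<sigma>}"

definition ordered_cone :: "(real^'n::{finite,linorder}) set" where
  "ordered_cone = {x. \<forall>i j. i \<le> j \<longrightarrow> x $ j \<le> x $ i}"

definition locally_symmetric :: "(real^'n::{finite,linorder}) set \<Rightarrow> bool" where
  "locally_symmetric S \<longleftrightarrow> S \<inter> ordered_cone \<noteq> {} \<and>
     (\<forall>x\<in>S. \<exists>\<delta>>0. \<forall>y\<in>S \<inter> ball x \<delta>. \<forall>\<sigma>.
        \<sigma> permutes UNIV \<and> perm_act \<sigma> y = y \<longrightarrow>
        perm_act \<sigma> ` (S \<inter> ball x \<delta>) = S \<inter> ball x \<delta>)"

definition C2_on :: "(real^'n::finite) set \<Rightarrow> (real^'n \<Rightarrow> real^'m::finite) \<Rightarrow> bool" where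
  "C2_on U f \<longleftrightarrow> (\<exists>f' f''.
     (\<forall>x\<in>U. (f has_derivative blinfun_apply (f' x)) (at x)) \<and>
     (\<forall>x\<in>U. (f' has_derivative blinfun_apply (f'' x)) (at x)) \<and>
     continuous_on U f'')"

text \<open>Connected C^2 submanifold without boundary of R^n (of some dimension d):
  locally straightened by a C^2 diffeomorphism onto a linear subspace.\<close>
definition C2_submanifold :: "(real^'n::finite) set \<Rightarrow> bool" where
  "C2_submanifold M \<longleftrightarrow> connected M \<and>
     (\<exists>d::nat. \<forall>x\<in>M. \<exists>U V (\<Phi>::real^'n \<Rightarrow> real^'n) (\<Psi>::real^'n \<Rightarrow> real^'n) L.
        open U \<and> x \<in> U \<and> open V \<and> C2_on U \<Phi> \<and> C2_on V \<Psi> \<and>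
        \<Phi> ` U = V \<and> (\<forall>y\<in>U. \<Psi> (\<Phi> y) = y) \<and> (\<forall>z\<in>V. \<Phi> (\<Psi> z) = z) \<and>
        subspace L \<and> dim L = d \<and> \<Phi> ` (M \<inter> U) = V \<inter> L)"

definition locally_symmetric_C2_submanifold :: "(real^'n::{finite,linorder}) set \<Rightarrow> bool" where
  "locally_symmetric_C2_submanifold M \<longleftrightarrow> C2_submanifold M \<and> locally_symmetric M"

definition tangent_space :: "(real^'n::finite) set \<Rightarrow> real^'n \<Rightarrow> (real^'n) set" where
  "tangent_space M x = {v. \<exists>\<gamma> \<epsilon>. \<epsilon> > 0 \<and> (\<forall>t. \<bar>t\<bar> < \<epsilon> \<longrightarrow> \<gamma> t \<in> M) \<and>
       \<gamma> 0 = x \<and> (\<gamma> has_vector_derivative v) (at 0)}"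

definition normal_space :: "(real^'n::finite) set \<Rightarrow> real^'n \<Rightarrow> (real^'n) set" where
  "normal_space M x = {v. \<forall>t\<in>tangent_space M x. v \<bullet> t = 0}"

definition characteristic_perm :: "(real^'n::finite) set \<Rightarrow> ('n \<Rightarrow> 'n) \<Rightarrow> bool" where
  "characteristic_perm M \<sigma> \<longleftrightarrow> \<sigma> permutes UNIV \<and>
     (\<exists>y\<in>M. \<exists>\<delta>>0. M \<inter> ball y \<delta> \<subseteq> Delta \<sigma>)"

end

theory Submission
  imports Defs
begin

text \<open>Fix i \<noteq> j, both fixed by \<sigma>*, and let e = e_i - e_j. If q \<in> M has q_i = q_j, the
  transposition (i j) fixes q, so by local symmetry it maps M to itself near q; applied to
  points m near q with m_i \<noteq> m_j it yields secants m - (i j) m of M in direction e arbitrarily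
  close to q. Call q flat if M lies in the hyperplane orthogonal to e near q. The flat points
  are open in M, and also closed: at a limit point q of flat points e is normal to M and
  q_i = q_j, so if q were not flat, e would also be a limiting secant direction, hence tangent,
  hence 0. As M is connected and meets \<Delta>(\<sigma>*), where coordinates i and j differ, no point
  is flat. Since x_i = x_j at the given point x (i and j lie in one cycle of \<sigma>), e is a
  limiting secant direction at x, and every normal vector v satisfies v_i - v_j = v \<bullet> e = 0.\<close>

lemma Delta_eq_iff_same_cycle:
  assumes "x \<in> Delta \<sigma>"
  shows "x $ j = x $ i \<longleftrightarrow> same_cycle \<sigma> i j"
proof -
  have "{k. same_cycle \<sigma> i k} \<in> vec_partition x"
    using assms unfolding Delta_def perm_partition_def by blast
  then obtain m where m: "{k. same_cycle \<sigma> i k} = {k. x $ k = x $ m}"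
    unfolding vec_partition_def by blast
  have "same_cycle \<sigma> i i" unfolding same_cycle_def by (rule exI[of _ 0]) simp
  then have "x $ i = x $ m" using m by blast
  then show ?thesis using m by auto
qed

lemma same_cycle_fixpoint:
  assumes "\<sigma> i = i"
  shows "same_cycle \<sigma> i j \<longleftrightarrow> j = i"
proof -
  have "(\<sigma> ^^ k) i = i" for k by (induction k) (simp_all add: assms)
  then show ?thesis unfolding same_cycle_def by (auto intro: exI[of _ 0])
qed

lemma continuous_derivative_uniform_linearization:
  fixes \<Psi> :: "'a::real_normed_vector \<Rightarrow> 'b::real_normed_vector"
  assumes "open V" "z0 \<in> V" "\<And>z. z \<in> V \<Longrightarrow> (\<Psi> has_derivative blinfun_apply (\<Psi>' z)) (at z)"
    and "continuous (at z0) \<Psi>'" "\<eta> > 0"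
  obtains r where "r > 0" "ball z0 r \<subseteq> V"
    "\<And>a b. a \<in> ball z0 r \<Longrightarrow> b \<in> ball z0 r \<Longrightarrow>
       norm (\<Psi> a - \<Psi> b - \<Psi>' z0 (a - b)) \<le> \<eta> * norm (a - b)"
proof -
  obtain d1 where d1: "d1 > 0" "\<And>x. dist x z0 < d1 \<Longrightarrow> dist (\<Psi>' x) (\<Psi>' z0) < \<eta>"
    using assms(4,5) unfolding continuous_at_eps_delta by blast
  obtain d2 where d2: "d2 > 0" "ball z0 d2 \<subseteq> V" using assms(1,2) open_contains_ball by blast
  define r where "r = min d1 d2"
  have r: "r > 0" "ball z0 r \<subseteq> V" using d1 d2 unfolding r_def by auto
  have "norm (\<Psi> a - \<Psi> b - \<Psi>' z0 (a - b)) \<le> norm (a - b) * \<eta>"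
    if a: "a \<in> ball z0 r" and b: "b \<in> ball z0 r" for a b
  proof (rule differentiable_bound_linearization[where S="ball z0 r" and a=b and b=a])
    fix t :: real assume "t \<in> {0..1}"
    then have "(1 - t) *\<^sub>R b + t *\<^sub>R a \<in> ball z0 r"
      using convexD[OF convex_ball b a, of "1 - t" t] by auto
    then show "b + t *\<^sub>R (a - b) \<in> ball z0 r" by (simp add: algebra_simps)
  next
    fix x assume "x \<in> ball z0 r"
    then show "(\<Psi> has_derivative blinfun_apply (\<Psi>' x)) (at x within ball z0 r)"
      using assms(3) r(2) has_derivative_at_withinI by blast
  next
    fix x assume "x \<in> ball z0 r"
    then have "norm (\<Psi>' x - \<Psi>' z0) < \<eta>"
      using d1(2)[of x] unfolding r_def by (simp add: dist_norm norm_minus_commute)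
    then show "onorm (blinfun_apply (\<Psi>' x) - blinfun_apply (\<Psi>' z0)) \<le> \<eta>"
      by (simp add: norm_blinfun.rep_eq blinfun.diff_left[abs_def] fun_diff_def)
  qed (use r in simp)
  then show ?thesis using that r by (simp add: mult.commute)
qed

lemma zero_if_abs_le_all_pos_multiples:
  fixes x C :: real
  assumes "\<And>\<eta>. \<eta> > 0 \<Longrightarrow> \<bar>x\<bar> \<le> C * \<eta>"
  shows "x = 0"
proof (rule ccontr)
  assume "x \<noteq> 0"
  define \<eta> where "\<eta> = \<bar>x\<bar> / (2 * (\<bar>C\<bar> + 1))"
  have \<eta>: "\<eta> > 0" using \<open>x \<noteq> 0\<close> unfolding \<eta>_def by (simp add: add_nonneg_pos)
  have "C * \<eta> \<le> (\<bar>C\<bar> + 1) * \<eta>" using \<eta> by (intro mult_right_mono) auto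
  also have "\<dots> = \<bar>x\<bar> / 2" unfolding \<eta>_def by (simp add: field_simps add_nonneg_pos)
  finally show False using assms[OF \<eta>] \<open>x \<noteq> 0\<close> by simp
qed

definition secant_direction :: "('a::real_normed_vector) set \<Rightarrow> 'a \<Rightarrow> 'a \<Rightarrow> bool" where
  "secant_direction M p e \<longleftrightarrow> (\<forall>\<epsilon>>0. \<exists>m\<in>M. \<exists>m'\<in>M. \<exists>c.
     dist m p < \<epsilon> \<and> dist m' p < \<epsilon> \<and> c \<noteq> 0 \<and> m - m' = c *\<^sub>R e)"

definition flat_locus :: "('a::real_inner) set \<Rightarrow> 'a \<Rightarrow> 'a set" where
  "flat_locus M e = {q \<in> M. \<exists>\<delta>>0. \<forall>m\<in>M. dist m q < \<delta> \<longrightarrow> e \<bullet> m = 0}"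

locale submanifold_chart =
  fixes M :: "(real^'n::finite) set" and p :: "real^'n"
    and U V L :: "(real^'n) set" and \<Phi> \<Psi> :: "real^'n \<Rightarrow> real^'n"
    and \<Phi>' \<Psi>' :: "real^'n \<Rightarrow> ((real^'n) \<Rightarrow>\<^sub>L (real^'n))"
  assumes p_in_M: "p \<in> M" and p_in_U: "p \<in> U" and open_U: "open U" and open_V: "open V"
    and subspace_L: "subspace L"
    and Psi_Phi: "\<And>y. y \<in> U \<Longrightarrow> \<Psi> (\<Phi> y) = y"
    and Phi_image: "\<Phi> ` (M \<inter> U) = V \<inter> L"
    and Phi_deriv: "\<And>x. x \<in> U \<Longrightarrow> (\<Phi> has_derivative blinfun_apply (\<Phi>' x)) (at x)"
    and Psi_deriv: "\<And>z. z \<in> V \<Longrightarrow> (\<Psi> has_derivative blinfun_apply (\<Psi>' z)) (at z)"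
    and Phi'_cont: "continuous (at p) \<Phi>'"
    and Psi'_cont: "continuous (at (\<Phi> p)) \<Psi>'"

lemma C2_submanifold_chart:
  assumes "C2_submanifold M" "p \<in> M"
  obtains U V L \<Phi> \<Psi> \<Phi>' \<Psi>' where "submanifold_chart M p U V L \<Phi> \<Psi> \<Phi>' \<Psi>'"
proof -
  obtain U V L and \<Phi> \<Psi> :: "real^'a \<Rightarrow> real^'a" where
    c: "open U" "p \<in> U" "open V" "C2_on U \<Phi>" "C2_on V \<Psi>" "\<forall>y\<in>U. \<Psi> (\<Phi> y) = y"
       "subspace L" "\<Phi> ` (M \<inter> U) = V \<inter> L"
    using assms unfolding C2_submanifold_def by meson
  obtain \<Phi>' \<Phi>'' where P: "\<forall>x\<in>U. (\<Phi> has_derivative blinfun_apply (\<Phi>' x)) (at x)"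
     "\<forall>x\<in>U. (\<Phi>' has_derivative blinfun_apply (\<Phi>'' x)) (at x)"
    using c(4) unfolding C2_on_def by blast
  obtain \<Psi>' \<Psi>'' where Q: "\<forall>z\<in>V. (\<Psi> has_derivative blinfun_apply (\<Psi>' z)) (at z)"
     "\<forall>z\<in>V. (\<Psi>' has_derivative blinfun_apply (\<Psi>'' z)) (at z)"
    using c(5) unfolding C2_on_def by blast
  have "\<Phi> p \<in> V" using c(2,8) assms(2) by blast
  then have "submanifold_chart M p U V L \<Phi> \<Psi> \<Phi>' \<Psi>'"
    using c P Q assms(2) has_derivative_continuous by unfold_locales blast+
  then show thesis by (rule that)
qed

context submanifold_chart
begin

lemma chart_point:
  assumes "y \<in> M" "y \<in> U"
  shows "\<Phi> y \<in> V" "\<Phi> y \<in> L" "\<Psi> (\<Phi> y) = y"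
  using assms Phi_image Psi_Phi by blast+

lemma chart_preimage:
  assumes "z \<in> V" "z \<in> L"
  shows "\<Psi> z \<in> M"
proof -
  obtain y where "y \<in> M" "y \<in> U" "z = \<Phi> y" using assms Phi_image by blast
  then show ?thesis using Psi_Phi by simp
qed

lemma chart_centre: "\<Phi> p \<in> V" "\<Phi> p \<in> L" "\<Psi> (\<Phi> p) = p"
  using chart_point p_in_M p_in_U by blast+

lemma tangent_vector:
  assumes "w \<in> L"
  shows "\<Psi>' (\<Phi> p) w \<in> tangent_space M p"
proof -
  let ?z = "\<Phi> p"
  obtain r where r: "r > 0" "ball ?z r \<subseteq> V" using open_V chart_centre open_contains_ball by blast
  define \<epsilon> where "\<epsilon> = r / (norm w + 1)"
  have \<epsilon>: "\<epsilon> > 0" using r unfolding \<epsilon>_def by (simp add: add_nonneg_pos)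
  define \<gamma> where "\<gamma> t = \<Psi> (?z + t *\<^sub>R w)" for t :: real
  have "\<gamma> t \<in> M" if t: "\<bar>t\<bar> < \<epsilon>" for t
  proof -
    have "\<bar>t\<bar> * norm w \<le> \<bar>t\<bar> * (norm w + 1)" by (simp add: mult_left_mono)
    also have "\<dots> < r" using t unfolding \<epsilon>_def by (simp add: pos_less_divide_eq add_nonneg_pos)
    finally have "?z + t *\<^sub>R w \<in> V" using r(2) by (auto simp: dist_norm)
    moreover have "?z + t *\<^sub>R w \<in> L"
      using subspace_L chart_centre assms by (simp add: subspace_add subspace_scale)
    ultimately show ?thesis using chart_preimage unfolding \<gamma>_def by blast
  qed
  moreover have "(\<gamma> has_vector_derivative \<Psi>' ?z w) (at 0)"
  proof -
    have "((\<lambda>t. ?z + t *\<^sub>R w) has_vector_derivative w) (at 0)"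
      by (auto intro!: derivative_eq_intros)
    moreover have "(\<Psi> has_derivative \<Psi>' ?z) (at ?z within range (\<lambda>t. ?z + t *\<^sub>R w))"
      using Psi_deriv chart_centre(1) has_derivative_at_withinI by blast
    ultimately show ?thesis
      using vector_derivative_diff_chain_within unfolding \<gamma>_def o_def by fastforce
  qed
  moreover have "\<gamma> 0 = p" unfolding \<gamma>_def using chart_centre(3) by simp
  ultimately show ?thesis unfolding tangent_space_def using \<epsilon> by blast
qed

lemma Phi_local_lipschitz:
  obtains r B where "r > 0" "ball p r \<subseteq> U"
    "\<And>a b. a \<in> ball p r \<Longrightarrow> b \<in> ball p r \<Longrightarrow> norm (\<Phi> a - \<Phi> b) \<le> B * norm (a - b)"
proof -
  obtain r where r: "r > 0" "ball p r \<subseteq> U"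
    "\<And>a b. a \<in> ball p r \<Longrightarrow> b \<in> ball p r \<Longrightarrow>
       norm (\<Phi> a - \<Phi> b - \<Phi>' p (a - b)) \<le> 1 * norm (a - b)"
    using continuous_derivative_uniform_linearization[OF open_U p_in_U Phi_deriv Phi'_cont,
        of 1] by auto
  have "norm (\<Phi> a - \<Phi> b) \<le> (norm (\<Phi>' p) + 1) * norm (a - b)"
    if "a \<in> ball p r" "b \<in> ball p r" for a b
  proof -
    have "norm (\<Phi> a - \<Phi> b)
        \<le> norm (\<Phi> a - \<Phi> b - \<Phi>' p (a - b)) + norm (\<Phi>' p (a - b))"
      by (metis diff_add_cancel norm_triangle_ineq)
    also have "\<dots> \<le> norm (a - b) + norm (\<Phi>' p) * norm (a - b)"
      using r(3)[OF that] norm_blinfun[of "\<Phi>' p" "a - b"] by simp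
    finally show ?thesis by (simp add: algebra_simps)
  qed
  then show thesis using that r by blast
qed

text \<open>m - m' = \<Psi> a - \<Psi> b differs from \<Psi>'(\<Phi> p)(a - b), which is orthogonal to u,
  by o(|a - b|) = o(|m - m'|), since \<Phi> is Lipschitz near p.\<close>
lemma secant_direction_orthogonal:
  assumes orth: "\<And>w. w \<in> L \<Longrightarrow> u \<bullet> \<Psi>' (\<Phi> p) w = 0"
    and sec: "secant_direction M p e"
  shows "u \<bullet> e = 0"
proof -
  let ?z = "\<Phi> p"
  obtain r1 B where r1: "r1 > 0" "ball p r1 \<subseteq> U"
    and lip: "\<And>a b. a \<in> ball p r1 \<Longrightarrow> b \<in> ball p r1 \<Longrightarrow> norm (\<Phi> a - \<Phi> b) \<le> B * norm (a - b)"
    using Phi_local_lipschitz by metis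
  have "\<bar>u \<bullet> e\<bar> \<le> (norm u * B * norm e) * \<eta>" if \<eta>: "\<eta> > 0" for \<eta>
  proof -
    obtain r2 where r2: "r2 > 0" "ball ?z r2 \<subseteq> V"
      and lin: "\<And>a b. a \<in> ball ?z r2 \<Longrightarrow> b \<in> ball ?z r2 \<Longrightarrow>
         norm (\<Psi> a - \<Psi> b - \<Psi>' ?z (a - b)) \<le> \<eta> * norm (a - b)"
      using continuous_derivative_uniform_linearization[OF open_V chart_centre(1) Psi_deriv Psi'_cont \<eta>]
      by blast
    have "continuous (at p) \<Phi>" using Phi_deriv p_in_U has_derivative_continuous by blast
    then obtain r3 where r3: "r3 > 0" "\<And>x. dist x p < r3 \<Longrightarrow> dist (\<Phi> x) ?z < r2"
      using r2(1) unfolding continuous_at_eps_delta by blast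
    obtain m m' c where mm: "m \<in> M" "m' \<in> M" "dist m p < min r1 r3" "dist m' p < min r1 r3"
      "c \<noteq> 0" "m - m' = c *\<^sub>R e"
      using sec r1(1) r3(1) unfolding secant_direction_def by (metis min_less_iff_conj)
    have mb: "m \<in> ball p r1" "m' \<in> ball p r1" using mm by (auto simp: dist_commute)
    then have "m \<in> U" "m' \<in> U" using r1(2) by auto
    then have a: "\<Phi> m \<in> L" "\<Psi> (\<Phi> m) = m" and b: "\<Phi> m' \<in> L" "\<Psi> (\<Phi> m') = m'"
      using chart_point mm(1,2) by blast+
    have ab: "\<Phi> m \<in> ball ?z r2" "\<Phi> m' \<in> ball ?z r2"
      using r3(2) mm(3,4) by (auto simp: dist_commute)
    define err where "err = \<Psi> (\<Phi> m) - \<Psi> (\<Phi> m') - \<Psi>' ?z (\<Phi> m - \<Phi> m')"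
    have "\<Phi> m - \<Phi> m' \<in> L" using subspace_L a b subspace_diff by blast
    then have "u \<bullet> (m - m') = u \<bullet> err"
      using orth a b unfolding err_def by (simp add: inner_diff_right)
    then have "\<bar>c\<bar> * \<bar>u \<bullet> e\<bar> \<le> norm u * norm err"
      using mm(6) Cauchy_Schwarz_ineq2[of u err] by (simp add: abs_mult)
    also have "\<dots> \<le> norm u * (\<eta> * norm (\<Phi> m - \<Phi> m'))"
      using lin[OF ab] a(2) b(2) unfolding err_def by (simp add: mult_left_mono)
    also have "\<dots> \<le> norm u * (\<eta> * (B * norm (m - m')))"
      using lip[OF mb] \<eta> by (simp add: mult_left_mono)
    also have "\<dots> = \<bar>c\<bar> * ((norm u * B * norm e) * \<eta>)"
      using mm(6) by (simp add: algebra_simps)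
    finally show ?thesis using mm(5) by simp
  qed
  then show ?thesis by (rule zero_if_abs_le_all_pos_multiples)
qed

text \<open>Near the flat point q, M lies in the hyperplane orthogonal to e, so moving from \<Phi> q
  along w \<in> L does not change e \<bullet> \<Psi>, whereas the linearization at \<Phi> p predicts a change
  proportional to e \<bullet> \<Psi>'(\<Phi> p) w.\<close>
lemma flat_point_linearization_bound:
  assumes r: "ball (\<Phi> p) r \<subseteq> V"
    and lin: "\<And>a b. a \<in> ball (\<Phi> p) r \<Longrightarrow> b \<in> ball (\<Phi> p) r \<Longrightarrow>
       norm (\<Psi> a - \<Psi> b - \<Psi>' (\<Phi> p) (a - b)) \<le> \<eta> * norm (a - b)"
    and q: "q \<in> flat_locus M e" "q \<in> U" "dist (\<Phi> q) (\<Phi> p) < r" and w: "w \<in> L" "w \<noteq> 0"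
  shows "\<bar>e \<bullet> \<Psi>' (\<Phi> p) w\<bar> \<le> (norm e * norm w) * \<eta>"
proof -
  let ?z = "\<Phi> p" and ?zq = "\<Phi> q"
  obtain \<delta> where qM: "q \<in> M" and \<delta>: "\<delta> > 0" "\<And>m. m \<in> M \<Longrightarrow> dist m q < \<delta> \<Longrightarrow> e \<bullet> m = 0"
    using q(1) unfolding flat_locus_def by blast
  have zq: "?zq \<in> V" "?zq \<in> L" "\<Psi> ?zq = q" using chart_point qM q(2) by blast+
  have "continuous (at ?zq) \<Psi>" using Psi_deriv zq(1) has_derivative_continuous by blast
  then obtain \<rho>1 where \<rho>1: "\<rho>1 > 0" "\<And>b. dist b ?zq < \<rho>1 \<Longrightarrow> dist (\<Psi> b) q < \<delta>"
    using \<delta>(1) zq(3) unfolding continuous_at_eps_delta by metis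
  define \<rho> where "\<rho> = min \<rho>1 (r - dist ?zq ?z)"
  have \<rho>: "\<rho> > 0" "\<rho> \<le> \<rho>1" "\<rho> \<le> r - dist ?zq ?z" unfolding \<rho>_def using \<rho>1 q(3) by auto
  define s where "s = \<rho> / (2 * norm w)"
  have s: "s > 0" unfolding s_def using \<rho> w(2) by simp
  define b where "b = ?zq + s *\<^sub>R w"
  have db: "dist b ?zq = \<rho> / 2" unfolding b_def s_def using w(2) \<rho> by (simp add: dist_norm)
  have "dist ?z b \<le> dist ?z ?zq + dist ?zq b" by (rule dist_triangle)
  also have "\<dots> < r" using db \<rho> by (simp add: dist_commute)
  finally have b_near: "b \<in> ball ?z r" by simp
  have "b \<in> L" unfolding b_def using subspace_L zq(2) w(1) by (simp add: subspace_add subspace_scale)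
  then have "\<Psi> b \<in> M" using chart_preimage b_near r by blast
  moreover have "dist (\<Psi> b) q < \<delta>" using \<rho>1(2) db \<rho> by simp
  ultimately have eb: "e \<bullet> \<Psi> b = 0" using \<delta>(2) by blast
  define err where "err = \<Psi> b - \<Psi> ?zq - \<Psi>' ?z (b - ?zq)"
  have "e \<bullet> err = - s * (e \<bullet> \<Psi>' ?z w)"
    using eb \<delta>(2)[OF qM] \<delta>(1) zq(3) unfolding err_def b_def
    by (simp add: inner_diff_right blinfun.scaleR_right)
  then have "s * \<bar>e \<bullet> \<Psi>' ?z w\<bar> \<le> norm e * norm err"
    using Cauchy_Schwarz_ineq2[of e err] s by (simp add: abs_mult)
  also have "\<dots> \<le> norm e * (\<eta> * norm (b - ?zq))"
    using lin[OF b_near] q(3) unfolding err_def by (simp add: dist_commute mult_left_mono)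
  also have "\<dots> = s * ((norm e * norm w) * \<eta>)" using s unfolding b_def by (simp add: algebra_simps)
  finally show ?thesis using s by simp
qed

lemma closure_flat_locus_orthogonal:
  assumes p: "p \<in> closure (flat_locus M e)" and w: "w \<in> L"
  shows "e \<bullet> \<Psi>' (\<Phi> p) w = 0"
proof (cases "w = 0")
  case True
  then show ?thesis by (simp add: blinfun.zero_right)
next
  case False
  have "\<bar>e \<bullet> \<Psi>' (\<Phi> p) w\<bar> \<le> (norm e * norm w) * \<eta>" if \<eta>: "\<eta> > 0" for \<eta>
  proof -
    obtain r2 where r2: "r2 > 0" "ball (\<Phi> p) r2 \<subseteq> V"
      and lin: "\<And>a b. a \<in> ball (\<Phi> p) r2 \<Longrightarrow> b \<in> ball (\<Phi> p) r2 \<Longrightarrow>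
         norm (\<Psi> a - \<Psi> b - \<Psi>' (\<Phi> p) (a - b)) \<le> \<eta> * norm (a - b)"
      using continuous_derivative_uniform_linearization[OF open_V chart_centre(1) Psi_deriv Psi'_cont \<eta>]
      by blast
    have "continuous (at p) \<Phi>" using Phi_deriv p_in_U has_derivative_continuous by blast
    then obtain r3 where r3: "r3 > 0" "\<And>x. dist x p < r3 \<Longrightarrow> dist (\<Phi> x) (\<Phi> p) < r2"
      using r2(1) unfolding continuous_at_eps_delta by blast
    obtain r1 where r1: "r1 > 0" "ball p r1 \<subseteq> U" using open_U p_in_U open_contains_ball by blast
    obtain q where q: "q \<in> flat_locus M e" "dist q p < min r1 r3"
      using p r1(1) r3(1) unfolding closure_approachable by (metis min_less_iff_conj)
    have "q \<in> U" using q(2) r1(2) by (auto simp: dist_commute)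
    then show ?thesis
      using flat_point_linearization_bound[OF r2(2) lin q(1)] r3(2) q(2) w False by simp
  qed
  then show ?thesis by (rule zero_if_abs_le_all_pos_multiples)
qed

end

lemma C2_submanifold_normal_orthogonal_secant:
  assumes "C2_submanifold M" "p \<in> M" "v \<in> normal_space M p" "secant_direction M p e"
  shows "v \<bullet> e = 0"
proof -
  obtain U V L \<Phi> \<Psi> \<Phi>' \<Psi>' where "submanifold_chart M p U V L \<Phi> \<Psi> \<Phi>' \<Psi>'"
    using C2_submanifold_chart assms(1,2) by blast
  then interpret submanifold_chart M p U V L \<Phi> \<Psi> \<Phi>' \<Psi>' .
  show ?thesis
    using secant_direction_orthogonal tangent_vector assms(3,4) unfolding normal_space_def by blast
qed

lemma C2_submanifold_no_secant_at_closure_flat_locus: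
  assumes "C2_submanifold M" "p \<in> M" "p \<in> closure (flat_locus M e)" "secant_direction M p e"
  shows "e = 0"
proof -
  obtain U V L \<Phi> \<Psi> \<Phi>' \<Psi>' where "submanifold_chart M p U V L \<Phi> \<Psi> \<Phi>' \<Psi>'"
    using C2_submanifold_chart assms(1,2) by blast
  then interpret submanifold_chart M p U V L \<Phi> \<Psi> \<Phi>' \<Psi>' .
  have "e \<bullet> e = 0"
    using secant_direction_orthogonal closure_flat_locus_orthogonal assms(3,4) by blast
  then show ?thesis by simp
qed

lemma openin_flat_locus: "openin (top_of_set M) (flat_locus M e)"
  unfolding openin_euclidean_subtopology_iff
proof (intro conjI ballI)
  show "flat_locus M e \<subseteq> M" unfolding flat_locus_def by blast
  fix q assume "q \<in> flat_locus M e"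
  then obtain \<delta> where \<delta>: "\<delta> > 0" "\<forall>m\<in>M. dist m q < \<delta> \<longrightarrow> e \<bullet> m = 0"
    unfolding flat_locus_def by blast
  have "q' \<in> flat_locus M e" if "q' \<in> M" "dist q' q < \<delta>/2" for q'
  proof -
    have "e \<bullet> m = 0" if "m \<in> M" "dist m q' < \<delta>/2" for m
      using \<delta>(2) dist_triangle[of m q q'] that \<open>dist q' q < \<delta>/2\<close> by fastforce
    then show ?thesis unfolding flat_locus_def using \<open>q' \<in> M\<close> \<delta>(1) half_gt_zero by blast
  qed
  then show "\<exists>\<epsilon>>0. \<forall>q'\<in>M. dist q' q < \<epsilon> \<longrightarrow> q' \<in> flat_locus M e"
    using \<delta>(1) half_gt_zero by blast
qed

lemma inner_axis_diff: "(axis i 1 - axis j 1) \<bullet> (x :: real^'n) = x $ i - x $ j"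
  by (simp add: inner_diff_left inner_axis')

lemma perm_act_transpose:
  "perm_act (Transposition.transpose i j) x $ k = x $ Transposition.transpose i j k"
  by (simp add: perm_act_def)

lemma locally_symmetric_transposition_secant:
  fixes M :: "(real^'n::{finite,linorder}) set"
  assumes ls: "locally_symmetric M" and p: "p \<in> M" "p $ i = p $ j"
    and not_flat: "p \<notin> flat_locus M (axis i 1 - axis j 1)"
  shows "secant_direction M p (axis i 1 - axis j 1)"
  unfolding secant_direction_def
proof (intro allI impI)
  fix \<epsilon> :: real assume \<epsilon>: "\<epsilon> > 0"
  let ?t = "Transposition.transpose i j"
  let ?e = "axis i 1 - axis j 1 :: real^'n::{finite,linorder}"
  obtain \<delta>0 where \<delta>0: "\<delta>0 > 0" and sym: "\<forall>y\<in>M \<inter> ball p \<delta>0. \<forall>\<sigma>.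
      \<sigma> permutes UNIV \<and> perm_act \<sigma> y = y \<longrightarrow> perm_act \<sigma> ` (M \<inter> ball p \<delta>0) = M \<inter> ball p \<delta>0"
    using ls p(1) unfolding locally_symmetric_def by blast
  have "perm_act ?t p = p"
    using p(2) by (simp add: vec_eq_iff perm_act_transpose Transposition.transpose_def)
  then have img: "perm_act ?t ` (M \<inter> ball p \<delta>0) = M \<inter> ball p \<delta>0"
    using sym[rule_format, of p ?t] p(1) \<delta>0 permutes_swap_id[of i UNIV j] by simp
  have "\<forall>\<delta>>0. \<exists>m\<in>M. dist m p < \<delta> \<and> m $ i \<noteq> m $ j"
    using not_flat p(1) unfolding flat_locus_def inner_axis_diff by auto
  moreover have "min (\<epsilon>/5) \<delta>0 > 0" using \<epsilon> \<delta>0 by simp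
  ultimately obtain m where m: "m \<in> M" "dist m p < min (\<epsilon>/5) \<delta>0" "m $ i \<noteq> m $ j"
    by blast
  define m' where "m' = perm_act ?t m"
  have "m \<in> M \<inter> ball p \<delta>0" using m by (simp add: dist_commute)
  then have m'M: "m' \<in> M" using img unfolding m'_def by blast
  have diff: "m - m' = (m $ i - m $ j) *\<^sub>R ?e"
    unfolding m'_def by (simp add: vec_eq_iff perm_act_transpose Transposition.transpose_def axis_def)
  have "\<bar>m $ i - m $ j\<bar> = \<bar>(m - p) $ i - (m - p) $ j\<bar>" using p(2) by simp
  also have "\<dots> \<le> 2 * dist m p"
    using component_le_norm_cart[of "m - p" i] component_le_norm_cart[of "m - p" j]
    by (simp add: dist_norm)
  finally have ij_small: "\<bar>m $ i - m $ j\<bar> \<le> 2 * dist m p" .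
  have "norm ?e \<le> 2"
    using norm_triangle_ineq4[of "axis i (1::real)" "axis j (1::real)"] by (simp add: norm_axis_1)
  then have "norm (m - m') \<le> 4 * dist m p"
    using mult_mono[OF ij_small \<open>norm ?e \<le> 2\<close>] unfolding diff by simp
  then have "dist m' m \<le> 4 * dist m p" by (simp add: dist_norm norm_minus_commute)
  then have "dist m' p < \<epsilon>" using m(2) dist_triangle[of m' p m] by (simp add: dist_commute)
  moreover have "dist m p < \<epsilon>" using m(2) \<epsilon> by linarith
  ultimately show "\<exists>m\<in>M. \<exists>m'\<in>M. \<exists>c. dist m p < \<epsilon> \<and> dist m' p < \<epsilon> \<and> c \<noteq> 0 \<and> m - m' = c *\<^sub>R ?e"
    using m(1,3) m'M diff by (metis right_minus_eq)
qed

lemma flat_locus_subset_hyperplane: "flat_locus M e \<subseteq> {x. e \<bullet> x = 0}"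
  unfolding flat_locus_def by force

lemma closedin_flat_locus_transposition:
  fixes M :: "(real^'n::{finite,linorder}) set"
  assumes M: "C2_submanifold M" "locally_symmetric M" and "i \<noteq> j"
  shows "closedin (top_of_set M) (flat_locus M (axis i 1 - axis j 1))"
proof -
  let ?e = "axis i 1 - axis j 1 :: real^'n::{finite,linorder}" let ?A = "flat_locus M ?e"
  have "q \<in> ?A" if q: "q \<in> M" "q \<in> closure ?A" for q
  proof (rule ccontr)
    assume "q \<notin> ?A"
    have "closure ?A \<subseteq> {x. ?e \<bullet> x = 0}"
      using closure_minimal[OF flat_locus_subset_hyperplane closed_hyperplane] .
    then have "q $ i = q $ j" using q(2) inner_axis_diff[of i j q] by auto
    then have "secant_direction M q ?e"
      using locally_symmetric_transposition_secant M(2) q(1) \<open>q \<notin> ?A\<close> by blast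
    then have "?e = 0" using C2_submanifold_no_secant_at_closure_flat_locus M(1) q by blast
    then have "?e $ i = 0" by simp
    then show False using \<open>i \<noteq> j\<close> by (simp add: axis_def)
  qed
  moreover have "?A \<subseteq> M" unfolding flat_locus_def by blast
  ultimately have "?A = M \<inter> closure ?A" using closure_subset by blast
  then show ?thesis unfolding closedin_closed by blast
qed

lemma flat_locus_transposition_empty:
  fixes M :: "(real^'n::{finite,linorder}) set"
  assumes M: "locally_symmetric_C2_submanifold M" and "characteristic_perm M \<sigma>s"
    and "\<sigma>s i = i" "i \<noteq> j"
  shows "flat_locus M (axis i 1 - axis j 1) = {}"
proof -
  let ?A = "flat_locus M (axis i 1 - axis j 1)"
  have C2: "C2_submanifold M" and ls: "locally_symmetric M"
    using M unfolding locally_symmetric_C2_submanifold_def by auto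
  obtain y where y: "y \<in> M" "y \<in> Delta \<sigma>s"
    using \<open>characteristic_perm M \<sigma>s\<close> unfolding characteristic_perm_def by force
  then have "y $ j \<noteq> y $ i"
    using Delta_eq_iff_same_cycle same_cycle_fixpoint \<open>\<sigma>s i = i\<close> \<open>i \<noteq> j\<close> by metis
  then have "(axis i 1 - axis j 1) \<bullet> y \<noteq> 0" by (simp add: inner_axis_diff)
  then have "y \<notin> ?A" using flat_locus_subset_hyperplane by blast
  moreover have "connected M" using C2 unfolding C2_submanifold_def by blast
  ultimately show ?thesis
    using connected_clopen openin_flat_locus closedin_flat_locus_transposition[OF C2 ls \<open>i \<noteq> j\<close>] y(1)
    by blast
qed

theorem theorem3p34:
  fixes M :: "(real^'n::{finite,linorder}) set"
    and \<sigma>s \<sigma> :: "'n::{finite,linorder} \<Rightarrow> 'n" and xbar v :: "real^'n::{finite,linorder}"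
  assumes "locally_symmetric_C2_submanifold M"
    and "characteristic_perm M \<sigma>s"
    and "\<sigma> permutes UNIV"
    and "xbar \<in> M \<inter> Delta \<sigma>"
    and "v \<in> normal_space M xbar"
  shows "\<forall>i j. i \<notin> supp \<sigma>s \<and> j \<notin> supp \<sigma>s \<and> same_cycle \<sigma> i j \<longrightarrow> v $ i = v $ j"
proof (intro allI impI)
  fix i j assume ij: "i \<notin> supp \<sigma>s \<and> j \<notin> supp \<sigma>s \<and> same_cycle \<sigma> i j"
  let ?e = "axis i 1 - axis j 1 :: real^'n::{finite,linorder}"
  have C2: "C2_submanifold M" and ls: "locally_symmetric M"
    using assms(1) unfolding locally_symmetric_C2_submanifold_def by auto
  have x: "xbar \<in> M" "xbar $ i = xbar $ j"
    using assms(4) Delta_eq_iff_same_cycle[of xbar \<sigma> j i] ij by auto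
  show "v $ i = v $ j"
  proof (cases "i = j")
    case False
    have "\<sigma>s i = i" using ij unfolding supp_def by simp
    then have "xbar \<notin> flat_locus M ?e"
      using flat_locus_transposition_empty[OF assms(1,2)] False by blast
    then have "secant_direction M xbar ?e"
      using locally_symmetric_transposition_secant ls x by blast
    then have "?e \<bullet> v = 0"
      using C2_submanifold_normal_orthogonal_secant C2 x(1) assms(5) by (metis inner_commute)
    then show ?thesis by (simp add: inner_axis_diff)
  qed simp
qed

end
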